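(* Let $\mu_1,\mu_2\in(0,1)$ with $\mu_1>\mu_2$ and $(\sqrt{\mu_1}+\sqrt{\mu_2})^2< 1/2$, and let $\mathcal{H}_\mu(\rho)=H_0\rho H_0^\dagger+H_1\rho H_1^\dagger$ with $H_0=|0\rangle\langle0|+\sqrt{\mu}\,|1\rangle\langle1|$, $H_1=\sqrt{1-\mu}\,|0\rangle\langle1|$ be the qubit amplitude damping channel. Then for distinguishing $\mathcal{H}_{\mu_1}$ and $\mathcal{H}_{\mu_2}$, a maximally entangled probe is strictly better than every single-system probe: for every maximally entangled two-qubit state $|\Psi\rangle$, $$\tfrac12+\tfrac14\|(\mathcal{H}_{\mu_1}\otimes\mathrm{id})(|\Psi\rangle\langle\Psi|)-(\mathcal{H}_{\mu_2}\otimes\mathrm{id})(|\Psi\rangle\langle\Psi|)\|_1>\max_{\rho}\Big(\tfrac12+\tfrac14\|\mathcal{H}_{\mu_1}(\rho)-\mathcal{H}_{\mu_2}(\rho)\|_1\Big),$$ the maximum being over single-qubit states $\rho$.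
   Context: For two channels chosen with equal priors $1/2$, the single-shot success probability with a single-system probe $\rho$ is $\frac12+\frac14\|\mathcal{N}_1(\rho)-\mathcal{N}_2(\rho)\|_1$ and with a bipartite probe $\rho_{AB}$ (channel on $A$) it is $\frac12+\frac14\|(\mathcal{N}_1\otimes\mathrm{id})(\rho_{AB})-(\mathcal{N}_2\otimes\mathrm{id})(\rho_{AB})\|_1$; $\|\cdot\|_1$ is the trace norm. A two-qubit pure state is maximally entangled if its reduced states are $\mathbb{I}_2/2$. The paper assumes $\mu_1>\mu_2$ throughout its treatment of amplitude damping channels. *)

theory Defs
  imports Complex_Main "Jordan_Normal_Form.Schur_Decomposition"
begin

definition dagger :: "complex mat \<Rightarrow> complex mat" where
  "dagger A = mat (dim_col A) (dim_row A) (\<lambda>(i,j). cnj (A $$ (j,i)))"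

definition mtrace :: "complex mat \<Rightarrow> complex" where
  "mtrace A = (\<Sum>i<dim_row A. A $$ (i,i))"

definition psd :: "nat \<Rightarrow> complex mat \<Rightarrow> bool" where
  "psd n A \<longleftrightarrow> A \<in> carrier_mat n n \<and> dagger A = A \<and>
     (\<forall>v \<in> carrier_vec n. 0 \<le> Re (cscalar_prod (A *\<^sub>v v) v))"

definition trace_norm :: "complex mat \<Rightarrow> real" where
  "trace_norm A = Re (mtrace (THE B. psd (dim_col A) B \<and> B * B = dagger A * A))"

definition density :: "nat \<Rightarrow> complex mat \<Rightarrow> bool" where
  "density n \<rho> \<longleftrightarrow> psd n \<rho> \<and> mtrace \<rho> = 1"

(* Kronecker product, index ordering (i,k) \<mapsto> i * dim B + k *)
definition kron :: "complex mat \<Rightarrow> complex mat \<Rightarrow> complex mat" where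
  "kron A B = mat (dim_row A * dim_row B) (dim_col A * dim_col B)
     (\<lambda>(i,j). A $$ (i div dim_row B, j div dim_col B) * B $$ (i mod dim_row B, j mod dim_col B))"

definition H0 :: "real \<Rightarrow> complex mat" where
  "H0 \<mu> = mat 2 2 (\<lambda>(i,j). if i = 0 \<and> j = 0 then 1
                         else if i = 1 \<and> j = 1 then complex_of_real (sqrt \<mu>) else 0)"

definition H1 :: "real \<Rightarrow> complex mat" where
  "H1 \<mu> = mat 2 2 (\<lambda>(i,j). if i = 0 \<and> j = 1 then complex_of_real (sqrt (1 - \<mu>)) else 0)"

definition ampdamp :: "real \<Rightarrow> complex mat \<Rightarrow> complex mat" where
  "ampdamp \<mu> \<rho> = H0 \<mu> * \<rho> * dagger (H0 \<mu>) + H1 \<mu> * \<rho> * dagger (H1 \<mu>)"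

definition ampdamp_id :: "real \<Rightarrow> complex mat \<Rightarrow> complex mat" where
  "ampdamp_id \<mu> \<rho> =
     kron (H0 \<mu>) (1\<^sub>m 2) * \<rho> * dagger (kron (H0 \<mu>) (1\<^sub>m 2))
   + kron (H1 \<mu>) (1\<^sub>m 2) * \<rho> * dagger (kron (H1 \<mu>) (1\<^sub>m 2))"

definition proj :: "complex vec \<Rightarrow> complex mat" where
  "proj v = mat (dim_vec v) (dim_vec v) (\<lambda>(i,j). v $ i * cnj (v $ j))"

definition ptrace_B :: "complex mat \<Rightarrow> complex mat" where
  "ptrace_B \<rho> = mat 2 2 (\<lambda>(a,a'). \<Sum>b<2. \<rho> $$ (a*2+b, a'*2+b))"

definition ptrace_A :: "complex mat \<Rightarrow> complex mat" where
  "ptrace_A \<rho> = mat 2 2 (\<lambda>(b,b'). \<Sum>a<2. \<rho> $$ (a*2+b, a*2+b'))"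

definition max_entangled :: "complex vec \<Rightarrow> bool" where
  "max_entangled \<psi> \<longleftrightarrow> \<psi> \<in> carrier_vec 4 \<and> cscalar_prod \<psi> \<psi> = 1 \<and>
     ptrace_B (proj \<psi>) = (1/2) \<cdot>\<^sub>m 1\<^sub>m 2 \<and> ptrace_A (proj \<psi>) = (1/2) \<cdot>\<^sub>m 1\<^sub>m 2"

definition p_single :: "real \<Rightarrow> real \<Rightarrow> complex mat \<Rightarrow> real" where
  "p_single \<mu>1 \<mu>2 \<rho> = 1/2 + 1/4 * trace_norm (ampdamp \<mu>1 \<rho> - ampdamp \<mu>2 \<rho>)"

definition p_ent :: "real \<Rightarrow> real \<Rightarrow> complex mat \<Rightarrow> real" where
  "p_ent \<mu>1 \<mu>2 \<rho> = 1/2 + 1/4 * trace_norm (ampdamp_id \<mu>1 \<rho> - ampdamp_id \<mu>2 \<rho>)"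

end

theory Submission
  imports Defs
begin

text \<open>A qubit state with population \<open>p\<close> in \<open>|1\<rangle>\<close> and coherence \<open>b\<close>, \<open>|b|\<^sup>2 \<le> p (1 - p)\<close>, is mapped
  by \<open>\<H>\<^sub>\<mu>\<^sub>1 - \<H>\<^sub>\<mu>\<^sub>2\<close> to the traceless hermitian matrix \<open>[[-(\<mu>\<^sub>1 - \<mu>\<^sub>2) p, \<epsilon> b], [\<epsilon> b\<^sup>*, (\<mu>\<^sub>1 - \<mu>\<^sub>2) p]]\<close>
  with \<open>\<epsilon> = \<surd>\<mu>\<^sub>1 - \<surd>\<mu>\<^sub>2\<close>. Its trace norm \<open>2 \<surd>((\<mu>\<^sub>1 - \<mu>\<^sub>2)\<^sup>2 p\<^sup>2 + \<epsilon>\<^sup>2 |b|\<^sup>2)\<close> is, after maximising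
  over \<open>p\<close>, at most \<open>\<epsilon> / \<surd>(1 - s\<^sup>2)\<close> where \<open>s = \<surd>\<mu>\<^sub>1 + \<surd>\<mu>\<^sub>2\<close>.

  A maximally entangled \<open>\<Psi>\<close> is \<open>(1 \<otimes> M) \<Phi>\<^sup>+\<close> with \<open>M\<close> unitary, and the channel acts on the
  other factor, so the entangled output difference is unitarily equivalent to the one for the Bell
  state \<open>\<Phi>\<^sup>+\<close>: a block matrix with trace norm \<open>(\<mu>\<^sub>1 - \<mu>\<^sub>2) / 2 + \<surd>((\<mu>\<^sub>1 - \<mu>\<^sub>2)\<^sup>2 + 4 \<epsilon>\<^sup>2) / 2 =
  \<epsilon> (s + \<surd>(s\<^sup>2 + 4)) / 2\<close>, which exceeds \<open>\<epsilon> / \<surd>(1 - s\<^sup>2)\<close> as soon as \<open>0 < s\<^sup>2 < 1/2\<close>.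

  Since the trace norm is defined through the positive semidefinite square root of \<open>X\<^sup>\<dagger> X\<close>, both
  trace norms are computed by exhibiting that square root, which is legitimate because positive
  semidefinite square roots are unique.\<close>

lemma dim_row_dagger [simp]: "dim_row (dagger A) = dim_col A"
  and dim_col_dagger [simp]: "dim_col (dagger A) = dim_row A"
  by (simp_all add: dagger_def)

lemma index_dagger [simp]:
  "i < dim_col A \<Longrightarrow> j < dim_row A \<Longrightarrow> dagger A $$ (i, j) = cnj (A $$ (j, i))"
  by (simp add: dagger_def)

lemma dagger_carrier_mat [simp]: "A \<in> carrier_mat n m \<Longrightarrow> dagger A \<in> carrier_mat m n"
  by auto

lemma dagger_dagger [simp]: "dagger (dagger A) = A"
  by (rule eq_matI) auto

lemma dagger_mult:
  "A \<in> carrier_mat n m \<Longrightarrow> B \<in> carrier_mat m k \<Longrightarrow> dagger (A * B) = dagger B * dagger A"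
  by (rule eq_matI) (auto simp: scalar_prod_def cnj_sum mult.commute)

lemma dagger_mat: "dagger (mat n m f) = mat m n (\<lambda>(i, j). cnj (f (j, i)))"
  by (rule eq_matI) auto

lemma index_mult_mat_sum:
  "A \<in> carrier_mat n m \<Longrightarrow> B \<in> carrier_mat m k \<Longrightarrow> i < n \<Longrightarrow> j < k \<Longrightarrow>
    (A * B) $$ (i, j) = (\<Sum>l<m. A $$ (i, l) * B $$ (l, j))"
  by (simp add: scalar_prod_def lessThan_atLeast0)

definition sesqform :: "nat \<Rightarrow> complex mat \<Rightarrow> (nat \<Rightarrow> complex) \<Rightarrow> (nat \<Rightarrow> complex) \<Rightarrow> complex" where
  "sesqform n B x y = (\<Sum>i<n. \<Sum>j<n. cnj (x i) * B $$ (i, j) * y j)"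

lemma cscalar_prod_eq_sesqform:
  assumes "B \<in> carrier_mat n n"
  shows "cscalar_prod (B *\<^sub>v vec n x) (vec n x) = sesqform n B x x"
  using assms
  by (auto simp: sesqform_def scalar_prod_def sum_distrib_left sum_distrib_right lessThan_atLeast0
           intro!: sum.cong)

lemma psd_sesqform_nonneg: "psd n B \<Longrightarrow> 0 \<le> Re (sesqform n B x x)"
  unfolding psd_def by (metis cscalar_prod_eq_sesqform vec_carrier)

lemma psdI:
  assumes B: "B \<in> carrier_mat n n" and "dagger B = B"
    and nonneg: "\<And>x. 0 \<le> Re (sesqform n B x x)"
  shows "psd n B"
  unfolding psd_def
proof (intro conjI ballI)
  fix v :: "complex vec"
  assume "v \<in> carrier_vec n"
  then have "v = vec n (\<lambda>i. v $ i)" by auto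
  then show "0 \<le> Re (cscalar_prod (B *\<^sub>v v) v)"
    using cscalar_prod_eq_sesqform[OF B] nonneg by metis
qed (use assms in auto)

lemma psd_index_cnj: "psd n B \<Longrightarrow> i < n \<Longrightarrow> j < n \<Longrightarrow> B $$ (j, i) = cnj (B $$ (i, j))"
  unfolding psd_def by (metis carrier_matD index_dagger)

lemma sesqform_swap:
  assumes "psd n B"
  shows "sesqform n B y x = cnj (sesqform n B x y)"
proof -
  have herm: "cnj (B $$ (j, i)) = B $$ (i, j)" if "i < n" "j < n" for i j
    using psd_index_cnj[OF assms that] by simp
  have "sesqform n B y x = (\<Sum>j<n. \<Sum>i<n. cnj (y i) * B $$ (i, j) * x j)"
    unfolding sesqform_def by (rule sum.swap)
  also have "\<dots> = cnj (sesqform n B x y)"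
    unfolding sesqform_def cnj_sum using herm by (intro sum.cong refl) (simp add: mult.commute)
  finally show ?thesis .
qed

lemma sesqform_mult_vec:
  "sesqform n B w x = (\<Sum>i<n. cnj (w i) * (\<Sum>j<n. B $$ (i, j) * x j))"
  unfolding sesqform_def by (simp add: sum_distrib_left mult.assoc)

lemma sesqform_diff_scaled:
  fixes t :: real
  shows "sesqform n B (\<lambda>k. x k - of_real t * w k) (\<lambda>k. x k - of_real t * w k) = sesqform n B x x
     - of_real t * (sesqform n B x w + sesqform n B w x) + of_real (t\<^sup>2) * sesqform n B w w"
proof -
  have "cnj (x i - of_real t * w i) * B $$ (i, j) * (x j - of_real t * w j) =
     cnj (x i) * B $$ (i, j) * x j
     - of_real t * (cnj (x i) * B $$ (i, j) * w j + cnj (w i) * B $$ (i, j) * x j)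
     + of_real (t\<^sup>2) * (cnj (w i) * B $$ (i, j) * w j)" for i j
    by (simp add: algebra_simps power2_eq_square)
  then show ?thesis
    unfolding sesqform_def by (simp only: sum.distrib sum_subtractf sum_distrib_left distrib_left)
qed

lemma linear_le_quadratic_imp_zero:
  fixes N R :: real
  assumes "\<And>t. 2 * t * N \<le> t\<^sup>2 * R"
  shows "N = 0"
proof (rule ccontr)
  assume "N \<noteq> 0"
  define c where "c = \<bar>R\<bar> + 1"
  define t where "t = N / c"
  have "c > 0" unfolding c_def by simp
  then have tc: "t * c = N" unfolding t_def by simp
  have "N\<^sup>2 * (2 * c) = (2 * t * N) * c\<^sup>2"
    using tc by (simp add: power2_eq_square algebra_simps)
  also have "\<dots> \<le> (t\<^sup>2 * R) * c\<^sup>2"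
    using assms by (simp add: mult_right_mono)
  also have "\<dots> = N\<^sup>2 * R"
    using tc by (simp add: power2_eq_square algebra_simps)
  finally have "2 * c \<le> R"
    using \<open>N \<noteq> 0\<close> by (simp add: mult_le_cancel_left_pos)
  then show False unfolding c_def by (cases "R \<ge> 0") auto
qed

section \<open>Uniqueness of square roots and the trace norm\<close>

lemma psd_sesqform_zero_imp_mult_zero:
  assumes B: "psd n B" and zero: "Re (sesqform n B x x) = 0" and "i < n"
  shows "(\<Sum>j<n. B $$ (i, j) * x j) = 0"
proof -
  define w where "w i = (\<Sum>j<n. B $$ (i, j) * x j)" for i
  define N where "N = (\<Sum>i<n. (cmod (w i))\<^sup>2)"
  have wx: "sesqform n B w x = of_real N"
  proof -
    have "sesqform n B w x = (\<Sum>i<n. w i * cnj (w i))"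
      unfolding sesqform_mult_vec w_def[symmetric] by (simp add: mult.commute)
    then show ?thesis unfolding N_def of_real_sum by (simp only: complex_norm_square)
  qed
  have xw: "sesqform n B x w = of_real N"
    using sesqform_swap[OF B, where y = x and x = w] wx by simp
  have "2 * t * N \<le> t\<^sup>2 * Re (sesqform n B w w)" for t
  proof -
    have "0 \<le> Re (sesqform n B (\<lambda>k. x k - of_real t * w k) (\<lambda>k. x k - of_real t * w k))"
      by (rule psd_sesqform_nonneg[OF B])
    also have "\<dots> = t\<^sup>2 * Re (sesqform n B w w) - 2 * t * N"
      unfolding sesqform_diff_scaled wx xw using zero by simp
    finally show ?thesis by simp
  qed
  then have "N = 0" by (rule linear_le_quadratic_imp_zero)
  then have "(cmod (w i))\<^sup>2 = 0"
    unfolding N_def using \<open>i < n\<close> by (subst (asm) sum_nonneg_eq_0_iff) auto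
  then show ?thesis unfolding w_def by simp
qed

lemma sum_rotate3:
  "(\<Sum>i<n. \<Sum>j<n. \<Sum>k<n::nat. f i j k) = (\<Sum>j<n. \<Sum>k<n. \<Sum>i<n. f i j k)"
proof -
  have "(\<Sum>i<n. \<Sum>j<n. \<Sum>k<n. f i j k) = (\<Sum>j<n. \<Sum>i<n. \<Sum>k<n. f i j k)"
    by (rule sum.swap)
  also have "\<dots> = (\<Sum>j<n. \<Sum>k<n. \<Sum>i<n. f i j k)"
    by (intro sum.cong refl sum.swap)
  finally show ?thesis .
qed

text \<open>In matrix language: if \<open>D\<close> is hermitian and \<open>B D = - D C\<close>, then
  \<open>tr (D B D) = - tr (D D C) = - tr (D C D)\<close> by cyclicity of the trace.\<close>

lemma sum_sesqform_columns_cancel: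
  assumes herm: "\<And>i j. i < n \<Longrightarrow> j < n \<Longrightarrow> cnj (d j i) = d i j"
    and anti: "\<And>i j. i < n \<Longrightarrow> j < n \<Longrightarrow>
      (\<Sum>k<n. B $$ (i, k) * d k j) = - (\<Sum>k<n. d i k * C $$ (k, j))"
  shows "(\<Sum>j<n. sesqform n B (\<lambda>k. d k j) (\<lambda>k. d k j) + sesqform n C (\<lambda>k. d k j) (\<lambda>k. d k j)) = 0"
proof -
  have col: "sesqform n M (\<lambda>k. d k j) (\<lambda>k. d k j) = (\<Sum>a<n. \<Sum>b<n. d j a * M $$ (a, b) * d b j)"
    if "j < n" for M j
    unfolding sesqform_def using herm that by (intro sum.cong refl) auto
  have "(\<Sum>j<n. sesqform n B (\<lambda>k. d k j) (\<lambda>k. d k j))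
      = (\<Sum>j<n. \<Sum>a<n. d j a * (\<Sum>b<n. B $$ (a, b) * d b j))"
    using col by (simp add: sum_distrib_left mult.assoc)
  also have "\<dots> = - (\<Sum>j<n. \<Sum>a<n. \<Sum>b<n. d j a * d a b * C $$ (b, j))"
    using anti by (simp add: sum_distrib_left mult.assoc sum_negf)
  also have "(\<Sum>j<n. \<Sum>a<n. \<Sum>b<n. d j a * d a b * C $$ (b, j))
      = (\<Sum>j<n. \<Sum>a<n. \<Sum>b<n. d j a * C $$ (a, b) * d b j)"
    by (subst sum_rotate3) (simp add: ac_simps)
  also have "\<dots> = (\<Sum>j<n. sesqform n C (\<lambda>k. d k j) (\<lambda>k. d k j))"
    using col by simp
  finally show ?thesis by (simp add: sum.distrib)
qed

lemma hermitian_square_zero_imp_zero: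
  fixes d :: "nat \<Rightarrow> nat \<Rightarrow> complex"
  assumes herm: "\<And>i j. i < n \<Longrightarrow> j < n \<Longrightarrow> cnj (d j i) = d i j"
    and square: "\<And>i j. i < n \<Longrightarrow> j < n \<Longrightarrow> (\<Sum>k<n. d i k * d k j) = 0"
    and "i < n" "j < n"
  shows "d i j = 0"
proof -
  have "of_real (\<Sum>k<n. (cmod (d k j))\<^sup>2) = (\<Sum>k<n. d j k * d k j)"
    unfolding of_real_sum using herm \<open>j < n\<close>
    by (intro sum.cong refl) (metis complex_norm_square lessThan_iff mult.commute)
  also have "\<dots> = 0" using square \<open>j < n\<close> by simp
  finally have "(\<Sum>k<n. (cmod (d k j))\<^sup>2) = 0" by (simp only: of_real_eq_0_iff)
  then have "\<forall>k\<in>{..<n}. (cmod (d k j))\<^sup>2 = 0"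
    by (subst (asm) sum_nonneg_eq_0_iff) auto
  then show ?thesis
    using \<open>i < n\<close> by simp
qed

lemma square_eq_imp_mult_diff:
  fixes B C :: "'a :: ring mat"
  assumes B: "B \<in> carrier_mat n n" and C: "C \<in> carrier_mat n n" and square: "B * B = C * C"
    and "i < n" "j < n"
  shows "(\<Sum>k<n. B $$ (i, k) * (B $$ (k, j) - C $$ (k, j)))
    = - (\<Sum>k<n. (B $$ (i, k) - C $$ (i, k)) * C $$ (k, j))"
proof -
  have "(\<Sum>k<n. B $$ (i, k) * (B $$ (k, j) - C $$ (k, j)))
      = (\<Sum>k<n. B $$ (i, k) * B $$ (k, j)) - (\<Sum>k<n. B $$ (i, k) * C $$ (k, j))"
    by (simp add: right_diff_distrib sum_subtractf)
  also have "(\<Sum>k<n. B $$ (i, k) * B $$ (k, j)) = (\<Sum>k<n. C $$ (i, k) * C $$ (k, j))"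
    using arg_cong[OF square, of "\<lambda>M. M $$ (i, j)"] assms(4,5)
    by (simp add: index_mult_mat_sum[OF B B] index_mult_mat_sum[OF C C])
  also have "(\<Sum>k<n. C $$ (i, k) * C $$ (k, j)) - (\<Sum>k<n. B $$ (i, k) * C $$ (k, j))
      = - (\<Sum>k<n. (B $$ (i, k) - C $$ (i, k)) * C $$ (k, j))"
    by (simp add: left_diff_distrib sum_subtractf)
  finally show ?thesis .
qed

lemma psd_square_root_unique:
  assumes B: "psd n B" and C: "psd n C" and square: "B * B = C * C"
  shows "B = C"
proof -
  have Bc: "B \<in> carrier_mat n n" and Cc: "C \<in> carrier_mat n n"
    using B C unfolding psd_def by auto
  define d where "d i j = B $$ (i, j) - C $$ (i, j)" for i j
  have herm: "cnj (d j i) = d i j" if "i < n" "j < n" for i j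
    unfolding d_def using psd_index_cnj[OF B that] psd_index_cnj[OF C that] by simp
  have anti: "(\<Sum>k<n. B $$ (i, k) * d k j) = - (\<Sum>k<n. d i k * C $$ (k, j))"
    if "i < n" "j < n" for i j
    unfolding d_def by (rule square_eq_imp_mult_diff[OF Bc Cc square that])
  define Q where "Q M j = Re (sesqform n M (\<lambda>k. d k j) (\<lambda>k. d k j))" for M j
  have sum_zero: "(\<Sum>j<n. Q B j + Q C j) = 0"
    using arg_cong[OF sum_sesqform_columns_cancel[OF herm anti], of Re]
    unfolding Q_def by (simp add: Re_sum)
  have nonneg: "0 \<le> Q B j" "0 \<le> Q C j" for j
    unfolding Q_def by (simp_all add: psd_sesqform_nonneg B C)
  have "\<forall>j\<in>{..<n}. Q B j + Q C j = 0"
    using sum_zero by (subst (asm) sum_nonneg_eq_0_iff) (simp_all add: nonneg add_nonneg_nonneg)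
  then have QB: "Q B j = 0" and QC: "Q C j = 0" if "j < n" for j
    using nonneg that by (metis add_nonneg_eq_0_iff lessThan_iff)+
  have square_zero: "(\<Sum>k<n. d i k * d k j) = 0" if "i < n" "j < n" for i j
  proof -
    have "(\<Sum>k<n. d i k * d k j) = (\<Sum>k<n. B $$ (i, k) * d k j) - (\<Sum>k<n. C $$ (i, k) * d k j)"
      by (simp add: d_def left_diff_distrib sum_subtractf)
    also have "\<dots> = 0"
      using psd_sesqform_zero_imp_mult_zero[OF B QB[OF that(2), unfolded Q_def] that(1)]
        psd_sesqform_zero_imp_mult_zero[OF C QC[OF that(2), unfolded Q_def] that(1)]
      by simp
    finally show ?thesis .
  qed
  have "d i j = 0" if "i < n" "j < n" for i j
    using hermitian_square_zero_imp_zero[OF herm square_zero that] .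
  then show ?thesis
    using Bc Cc by (intro eq_matI) (auto simp: d_def)
qed

lemma trace_norm_eqI:
  assumes "dim_col A = n" "psd n B" "B * B = dagger A * A"
  shows "trace_norm A = Re (mtrace B)"
proof -
  have "(THE B. psd (dim_col A) B \<and> B * B = dagger A * A) = B"
    using assms psd_square_root_unique by (intro the_equality) auto
  then show ?thesis unfolding trace_norm_def by simp
qed

lemma cscalar_prod_mult_mat_vec:
  assumes W: "W \<in> carrier_mat n m" and u: "u \<in> carrier_vec m" and v: "v \<in> carrier_vec n"
  shows "cscalar_prod (W *\<^sub>v u) v = cscalar_prod u (dagger W *\<^sub>v v)"
proof -
  have "cscalar_prod (W *\<^sub>v u) v = (\<Sum>i<n. (\<Sum>k<m. W $$ (i, k) * u $ k) * cnj (v $ i))"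
    using W u v by (simp add: scalar_prod_def lessThan_atLeast0)
  also have "\<dots> = (\<Sum>k<m. \<Sum>i<n. u $ k * (W $$ (i, k) * cnj (v $ i)))"
    by (subst sum.swap) (simp add: sum_distrib_right sum_distrib_left ac_simps)
  also have "\<dots> = cscalar_prod u (dagger W *\<^sub>v v)"
    using W u v by (simp add: scalar_prod_def lessThan_atLeast0 sum_distrib_left cnj_sum)
  finally show ?thesis .
qed

lemma psd_mult_dagger:
  assumes P: "psd n P" and W: "W \<in> carrier_mat n n"
  shows "psd n (W * P * dagger W)"
proof -
  have Pc: "P \<in> carrier_mat n n" and herm: "dagger P = P"
    using P unfolding psd_def by auto
  have Wd: "dagger W \<in> carrier_mat n n" using W by simp
  have "dagger (W * P * dagger W) = W * (P * dagger W)"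
    using W Pc herm by (simp add: dagger_mult[of "W * P" n n "dagger W" n] dagger_mult[OF W Pc])
  also have "\<dots> = W * P * dagger W"
    using assoc_mult_mat[OF W Pc Wd] by simp
  finally have "dagger (W * P * dagger W) = W * P * dagger W" .
  moreover have "0 \<le> Re (cscalar_prod ((W * P * dagger W) *\<^sub>v v) v)" if v: "v \<in> carrier_vec n" for v
  proof -
    have u: "dagger W *\<^sub>v v \<in> carrier_vec n" using Wd v by simp
    have "(W * P * dagger W) *\<^sub>v v = W *\<^sub>v (P *\<^sub>v (dagger W *\<^sub>v v))"
      using assoc_mult_mat_vec[OF mult_carrier_mat[OF W Pc] Wd v] assoc_mult_mat_vec[OF W Pc u] by simp
    then have "cscalar_prod ((W * P * dagger W) *\<^sub>v v) v
        = cscalar_prod (P *\<^sub>v (dagger W *\<^sub>v v)) (dagger W *\<^sub>v v)"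
      using cscalar_prod_mult_mat_vec[OF W _ v] Pc u by simp
    then show ?thesis using P u unfolding psd_def by simp
  qed
  ultimately show ?thesis
    unfolding psd_def using mult_carrier_mat[OF mult_carrier_mat[OF W Pc] Wd] by blast
qed

lemma mtrace_mult_commute:
  "A \<in> carrier_mat n m \<Longrightarrow> B \<in> carrier_mat m n \<Longrightarrow> mtrace (A * B) = mtrace (B * A)"
  unfolding mtrace_def
  by (simp add: scalar_prod_def lessThan_atLeast0 mult.commute) (rule sum.swap)

lemma unitary_cancel_left:
  assumes "W \<in> carrier_mat n n" "dagger W * W = 1\<^sub>m n" "A \<in> carrier_mat n k"
  shows "dagger W * (W * A) = A"
  using assms by (simp flip: assoc_mult_mat[of "dagger W" n n W n A k])

lemma mtrace_unitary_conj:
  assumes W: "W \<in> carrier_mat n n" and unitary: "dagger W * W = 1\<^sub>m n" and A: "A \<in> carrier_mat n n"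
  shows "mtrace (W * A * dagger W) = mtrace A"
proof -
  have "mtrace (W * A * dagger W) = mtrace (dagger W * (W * A))"
    using W A by (intro mtrace_mult_commute[of _ n n]) auto
  then show ?thesis
    using unitary_cancel_left[OF W unitary A] by simp
qed

lemma mult_unitary_conj:
  assumes W: "W \<in> carrier_mat n n" and unitary: "dagger W * W = 1\<^sub>m n"
    and A: "A \<in> carrier_mat n n" and C: "C \<in> carrier_mat n n"
  shows "(W * A * dagger W) * (W * C * dagger W) = W * (A * C) * dagger W"
proof -
  have Wd: "dagger W \<in> carrier_mat n n" using W by simp
  have WC: "W * C * dagger W = W * (C * dagger W)"
    by (rule assoc_mult_mat[OF W C Wd])
  have "(W * A * dagger W) * (W * C * dagger W) = (W * A) * (dagger W * (W * (C * dagger W)))"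
    unfolding WC using W A C Wd by (intro assoc_mult_mat) (auto intro: mult_carrier_mat)
  also have "dagger W * (W * (C * dagger W)) = C * dagger W"
    using unitary_cancel_left[OF W unitary mult_carrier_mat[OF C Wd]] .
  also have "(W * A) * (C * dagger W) = W * (A * C) * dagger W"
    using assoc_mult_mat[OF mult_carrier_mat[OF W A] C Wd] assoc_mult_mat[OF W A C] by simp
  finally show ?thesis .
qed

lemma dagger_unitary_conj:
  assumes "W \<in> carrier_mat n n" "A \<in> carrier_mat n n"
  shows "dagger (W * A * dagger W) = W * dagger A * dagger W"
  using assms by (simp add: dagger_mult[of "W * A" n n "dagger W" n] dagger_mult[of W n n A n]
      assoc_mult_mat[of W n n "dagger A" n "dagger W" n])

lemma trace_norm_unitary_conj:
  assumes W: "W \<in> carrier_mat n n" and unitary: "dagger W * W = 1\<^sub>m n"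
    and X: "X \<in> carrier_mat n n" and P: "psd n P" and root: "P * P = dagger X * X"
  shows "trace_norm (W * X * dagger W) = trace_norm X"
proof -
  have Pc: "P \<in> carrier_mat n n" using P unfolding psd_def by simp
  have "(W * P * dagger W) * (W * P * dagger W) = dagger (W * X * dagger W) * (W * X * dagger W)"
    using W X Pc by (simp add: mult_unitary_conj[OF W unitary] dagger_unitary_conj root)
  then have "trace_norm (W * X * dagger W) = Re (mtrace (W * P * dagger W))"
    using psd_mult_dagger[OF P W] W by (intro trace_norm_eqI) auto
  also have "\<dots> = Re (mtrace P)"
    by (simp add: mtrace_unitary_conj[OF W unitary Pc])
  also have "\<dots> = trace_norm X"
    using X P root by (intro trace_norm_eqI[symmetric]) auto
  finally show ?thesis .
qed

section \<open>Single-qubit probes\<close>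

lemma nat_less_2_iff: "(i::nat) < 2 \<longleftrightarrow> i = 0 \<or> i = 1"
  by auto

lemma nat_less_4_iff: "(i::nat) < 4 \<longleftrightarrow> i = 0 \<or> i = 1 \<or> i = 2 \<or> i = 3"
  by auto

lemma sum_lessThan_2: "(\<Sum>i<2. f i) = f 0 + f (1::nat)"
  by (simp add: numeral_2_eq_2)

lemma sum_lessThan_4: "(\<Sum>i<4. f i) = f 0 + f 1 + f 2 + f (3::nat)"
  by (simp add: eval_nat_numeral)

lemma mat_mult_mat: "mat n m f * mat m k g = mat n k (\<lambda>(i, j). \<Sum>l<m. f (i, l) * g (l, j))"
  by (rule eq_matI) (auto simp: scalar_prod_def lessThan_atLeast0)

lemma mat_minus_mat: "mat n m f - mat n m g = mat n m (\<lambda>ij. f ij - g ij)"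
  by (rule eq_matI) auto

lemma of_real_sqrt_mult_self: "0 \<le> x \<Longrightarrow> complex_of_real (sqrt x) * complex_of_real (sqrt x) = of_real x"
  by (simp flip: of_real_mult)

definition traceless_herm2 :: "real \<Rightarrow> complex \<Rightarrow> complex mat" where
  "traceless_herm2 x z = mat 2 2 (\<lambda>(i, j).
     if i = 0 \<and> j = 0 then - of_real x else if i = 0 \<and> j = 1 then z
     else if i = 1 \<and> j = 0 then cnj z else of_real x)"

text \<open>Its square is \<open>(x\<^sup>2 + |z|\<^sup>2) I\<close>, so the square root of \<open>X\<^sup>\<dagger> X\<close> is a multiple of the identity.\<close>

lemma trace_norm_traceless_herm2:
  "trace_norm (traceless_herm2 x z) = 2 * sqrt (x\<^sup>2 + (cmod z)\<^sup>2)"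
proof -
  define k where "k = x\<^sup>2 + (cmod z)\<^sup>2"
  have "k \<ge> 0" unfolding k_def by simp
  define B where "B = mat 2 2 (\<lambda>(i, j). if i = j then complex_of_real (sqrt k) else 0)"
  have "psd 2 B"
  proof (rule psdI)
    show "B \<in> carrier_mat 2 2" unfolding B_def by simp
    show "dagger B = B" unfolding B_def dagger_mat by (rule eq_matI) auto
    fix v
    have "Re (sesqform 2 B v v) = sqrt k * ((cmod (v 0))\<^sup>2 + (cmod (v 1))\<^sup>2)"
      unfolding sesqform_def B_def sum_lessThan_2 cmod_power2
      by (simp add: algebra_simps power2_eq_square)
    then show "0 \<le> Re (sesqform 2 B v v)" using \<open>k \<ge> 0\<close> by simp
  qed
  moreover have "complex_of_real (sqrt k) * complex_of_real (sqrt k) = of_real x * of_real x + z * cnj z"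
    unfolding of_real_sqrt_mult_self[OF \<open>k \<ge> 0\<close>]
    unfolding k_def of_real_add complex_norm_square by (simp add: power2_eq_square)
  then have "B * B = dagger (traceless_herm2 x z) * traceless_herm2 x z"
    unfolding B_def traceless_herm2_def dagger_mat mat_mult_mat sum_lessThan_2
    by (rule_tac eq_matI) (auto simp: nat_less_2_iff algebra_simps)
  ultimately have "trace_norm (traceless_herm2 x z) = Re (mtrace B)"
    by (intro trace_norm_eqI) (auto simp: traceless_herm2_def)
  also have "\<dots> = 2 * sqrt k"
    unfolding mtrace_def B_def sum_lessThan_2 by simp
  finally show ?thesis unfolding k_def .
qed

definition qubit_state :: "real \<Rightarrow> complex \<Rightarrow> complex mat" where
  "qubit_state p b = mat 2 2 (\<lambda>(i, j). if i = 0 \<and> j = 0 then of_real (1 - p) else if i = 0 \<and> j = 1 then b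
     else if i = 1 \<and> j = 0 then cnj b else of_real p)"

lemma density_2E:
  assumes "density 2 \<rho>"
  obtains p :: real and b where "\<rho> = qubit_state p b" and "(cmod b)\<^sup>2 \<le> p - p\<^sup>2"
proof -
  have P: "psd 2 \<rho>" and tr: "mtrace \<rho> = 1"
    using assms unfolding density_def by auto
  have \<rho>: "\<rho> \<in> carrier_mat 2 2" using P unfolding psd_def by auto
  define a where "a = Re (\<rho> $$ (0, 0))"
  define p where "p = Re (\<rho> $$ (1, 1))"
  define b where "b = \<rho> $$ (0, 1)"
  have \<rho>10: "\<rho> $$ (1, 0) = cnj b"
    unfolding b_def using psd_index_cnj[OF P, of 0 1] by simp
  have real_diag: "\<rho> $$ (i, i) = of_real (Re (\<rho> $$ (i, i)))" if "i < 2" for i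
    using psd_index_cnj[OF P that that] by (simp add: complex_eq_iff)
  have \<rho>00: "\<rho> $$ (0, 0) = of_real a" and \<rho>11: "\<rho> $$ (1, 1) = of_real p"
    unfolding a_def p_def using real_diag by auto
  have "a + p = 1"
    using tr \<rho>00 \<rho>11 \<rho> unfolding mtrace_def by (simp add: complex_eq_iff sum_lessThan_2)
  then have a: "a = 1 - p" by simp
  \<comment> \<open>the quadratic form at \<open>(b, -a)\<close> and at \<open>(-p, b\<^sup>*)\<close> is \<open>a det \<rho>\<close> and \<open>p det \<rho>\<close>\<close>
  have "0 \<le> Re (sesqform 2 \<rho> (\<lambda>i. if i = 0 then b else - of_real a) (\<lambda>i. if i = 0 then b else - of_real a))"
    "0 \<le> Re (sesqform 2 \<rho> (\<lambda>i. if i = 0 then - of_real p else cnj b) (\<lambda>i. if i = 0 then - of_real p else cnj b))"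
    using P by (simp_all add: psd_sesqform_nonneg)
  then have "0 \<le> a * (a * p - (cmod b)\<^sup>2)" "0 \<le> p * (a * p - (cmod b)\<^sup>2)"
    unfolding sesqform_def sum_lessThan_2 cmod_power2 using \<rho>00 \<rho>11 \<rho>10 b_def
    by (simp_all add: algebra_simps power2_eq_square)
  then have "0 \<le> (a + p) * (a * p - (cmod b)\<^sup>2)"
    by (simp add: distrib_right)
  then have "(cmod b)\<^sup>2 \<le> p - p\<^sup>2"
    using \<open>a + p = 1\<close> unfolding a by (simp add: power2_eq_square algebra_simps)
  moreover have "\<rho> = qubit_state p b"
    using \<rho> \<rho>00 \<rho>11 \<rho>10 unfolding qubit_state_def a b_def
    by (intro eq_matI) (auto simp: nat_less_2_iff)
  ultimately show thesis using that by blast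
qed

lemma ampdamp_mat:
  assumes "0 \<le> \<mu>" "\<mu> \<le> 1"
  shows "ampdamp \<mu> (mat 2 2 r) = mat 2 2 (\<lambda>(i, j).
     if i = 0 \<and> j = 0 then r (0, 0) + of_real (1 - \<mu>) * r (1, 1)
     else if i = 0 \<and> j = 1 then of_real (sqrt \<mu>) * r (0, 1)
     else if i = 1 \<and> j = 0 then of_real (sqrt \<mu>) * r (1, 0)
     else of_real \<mu> * r (1, 1))"
proof -
  have "complex_of_real (sqrt \<mu>) * complex_of_real (sqrt \<mu>) = of_real \<mu>"
    and "complex_of_real (sqrt (1 - \<mu>)) * (complex_of_real (sqrt (1 - \<mu>)) * z) = of_real (1 - \<mu>) * z"
    for z
    using assms by (simp_all add: of_real_sqrt_mult_self flip: mult.assoc)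
  note sqrt_squares = this
  show ?thesis
    unfolding ampdamp_def H0_def H1_def dagger_mat mat_mult_mat sum_lessThan_2
    by (intro eq_matI) (auto simp: nat_less_2_iff algebra_simps sqrt_squares)
qed

lemma ampdamp_diff_qubit_state:
  assumes "0 \<le> \<mu>2" "\<mu>2 \<le> \<mu>1" "\<mu>1 \<le> 1"
  shows "ampdamp \<mu>1 (qubit_state p b) - ampdamp \<mu>2 (qubit_state p b)
    = traceless_herm2 ((\<mu>1 - \<mu>2) * p) (of_real (sqrt \<mu>1 - sqrt \<mu>2) * b)"
proof -
  have "0 \<le> \<mu>1" "\<mu>2 \<le> 1" using assms by auto
  then show ?thesis
    unfolding qubit_state_def ampdamp_mat[OF \<open>0 \<le> \<mu>1\<close> assms(3)] ampdamp_mat[OF assms(1) \<open>\<mu>2 \<le> 1\<close>]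
    by (auto simp: mat_minus_mat traceless_herm2_def nat_less_2_iff algebra_simps intro!: eq_matI)
qed

lemma diff_le_inverse_four_mult:
  fixes c p :: real
  assumes "c > 0"
  shows "p - c * p\<^sup>2 \<le> 1 / (4 * c)"
proof -
  have "4 * c * (p - c * p\<^sup>2) \<le> 1"
    using zero_le_square[of "1 - 2 * c * p"] by (simp add: algebra_simps power2_eq_square)
  then show ?thesis
    using assms by (simp add: field_simps)
qed

lemma trace_norm_ampdamp_diff_le:
  assumes "density 2 \<rho>" and \<mu>: "0 \<le> \<mu>2" "\<mu>2 \<le> \<mu>1" "\<mu>1 \<le> 1"
    and small: "(sqrt \<mu>1 + sqrt \<mu>2)\<^sup>2 < 1"
  shows "trace_norm (ampdamp \<mu>1 \<rho> - ampdamp \<mu>2 \<rho>)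
    \<le> (sqrt \<mu>1 - sqrt \<mu>2) / sqrt (1 - (sqrt \<mu>1 + sqrt \<mu>2)\<^sup>2)"
proof -
  obtain p b where \<rho>: "\<rho> = qubit_state p b" and coherence: "(cmod b)\<^sup>2 \<le> p - p\<^sup>2"
    using density_2E[OF assms(1)] by blast
  define e where "e = sqrt \<mu>1 - sqrt \<mu>2"
  define s where "s = sqrt \<mu>1 + sqrt \<mu>2"
  define c where "c = 1 - s\<^sup>2"
  have "e \<ge> 0" "c > 0" using \<mu> small unfolding e_def s_def c_def by auto
  have "\<mu>1 - \<mu>2 = e * s" unfolding e_def s_def using \<mu> by (simp add: algebra_simps)
  then have "trace_norm (ampdamp \<mu>1 \<rho> - ampdamp \<mu>2 \<rho>) = 2 * sqrt ((e * s * p)\<^sup>2 + (cmod (of_real e * b))\<^sup>2)"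
    unfolding \<rho> ampdamp_diff_qubit_state[OF \<mu>] trace_norm_traceless_herm2 e_def by simp
  also have "(e * s * p)\<^sup>2 + (cmod (of_real e * b))\<^sup>2 = e\<^sup>2 * ((s * p)\<^sup>2 + (cmod b)\<^sup>2)"
    by (simp add: norm_mult power_mult_distrib algebra_simps)
  also have "2 * sqrt (e\<^sup>2 * ((s * p)\<^sup>2 + (cmod b)\<^sup>2)) = 2 * e * sqrt ((s * p)\<^sup>2 + (cmod b)\<^sup>2)"
    using \<open>e \<ge> 0\<close> by (simp add: real_sqrt_mult)
  also have "\<dots> \<le> 2 * e * sqrt (p - c * p\<^sup>2)"
    using coherence \<open>e \<ge> 0\<close> unfolding c_def
    by (intro mult_left_mono real_sqrt_le_mono) (auto simp: algebra_simps power_mult_distrib)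
  also have "\<dots> \<le> 2 * e * sqrt (1 / (4 * c))"
    using \<open>e \<ge> 0\<close> \<open>c > 0\<close> by (intro mult_left_mono real_sqrt_le_mono diff_le_inverse_four_mult) auto
  also have "\<dots> = e / sqrt c"
    using \<open>c > 0\<close> by (simp add: real_sqrt_divide real_sqrt_mult real_sqrt_four)
  finally show ?thesis unfolding e_def s_def c_def .
qed

lemma density_qubit_state_0: "density 2 (qubit_state 0 0)"
  unfolding density_def
proof
  show "psd 2 (qubit_state 0 0)"
    unfolding qubit_state_def
    by (rule psdI) (auto simp: dagger_mat sesqform_def sum_lessThan_2 intro!: eq_matI)
  show "mtrace (qubit_state 0 0) = 1"
    by (simp add: qubit_state_def mtrace_def sum_lessThan_2)
qed

section \<open>Maximally entangled probes\<close>

lemma kron_mat_one_2: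
  "kron (mat 2 2 f) (1\<^sub>m 2) = mat 4 4 (\<lambda>(i, j). if i mod 2 = j mod 2 then f (i div 2, j div 2) else 0)"
  unfolding kron_def by (rule eq_matI) (auto simp: less_mult_imp_div_less)

definition ampdamp_id_diag :: "real \<Rightarrow> nat \<Rightarrow> complex" where
  "ampdamp_id_diag \<mu> i = (if i < 2 then 1 else of_real (sqrt \<mu>))"

lemma kron_H0_one: "kron (H0 \<mu>) (1\<^sub>m 2) = mat 4 4 (\<lambda>(i, j). if i = j then ampdamp_id_diag \<mu> i else 0)"
  unfolding H0_def kron_mat_one_2 ampdamp_id_diag_def
  by (rule eq_matI; simp add: nat_less_4_iff; elim disjE; simp)

lemma kron_H1_one: "kron (H1 \<mu>) (1\<^sub>m 2) = mat 4 4 (\<lambda>(i, j). if j = i + 2 then of_real (sqrt (1 - \<mu>)) else 0)"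
  unfolding H1_def kron_mat_one_2
  by (rule eq_matI; simp add: nat_less_4_iff; elim disjE; simp)

lemma ampdamp_id_mat:
  assumes "\<mu> \<le> 1"
  shows "ampdamp_id \<mu> (mat 4 4 g) = mat 4 4 (\<lambda>(i, j). ampdamp_id_diag \<mu> i * ampdamp_id_diag \<mu> j * g (i, j)
     + (if i < 2 \<and> j < 2 then of_real (1 - \<mu>) * g (i + 2, j + 2) else 0))"
proof -
  have sqrt_square: "complex_of_real (sqrt (1 - \<mu>)) * z * complex_of_real (sqrt (1 - \<mu>)) = of_real (1 - \<mu>) * z" for z
    using of_real_sqrt_mult_self[of "1 - \<mu>"] assms by (simp add: ac_simps)
  show ?thesis
    unfolding ampdamp_id_def kron_H0_one kron_H1_one dagger_mat mat_mult_mat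
    by (rule eq_matI; simp add: nat_less_4_iff; elim disjE;
        simp add: sum_lessThan_4 ampdamp_id_diag_def sqrt_square numeral_2_eq_2 numeral_3_eq_3)
qed

text \<open>\<open>bell_frame \<Psi> = 1 \<otimes> M\<close> with \<open>M\<^sub>b\<^sub>a = \<surd>2 \<Psi>\<^sub>a\<^sub>b\<close>, so that \<open>\<Psi> = (1 \<otimes> M) \<Phi>\<^sup>+\<close> for the Bell
  state \<open>\<Phi>\<^sup>+ = (|00\<rangle> + |11\<rangle>) / \<surd>2\<close>; the channel acts on the first factor and therefore
  commutes with the conjugation by \<open>1 \<otimes> M\<close>.\<close>

definition bell_frame :: "complex vec \<Rightarrow> complex mat" where
  "bell_frame \<Psi> = mat 4 4 (\<lambda>(i, j).
     if i div 2 = j div 2 then of_real (sqrt 2) * \<Psi> $ (2 * (j mod 2) + i mod 2) else 0)"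

definition block_mat4 :: "real \<Rightarrow> real \<Rightarrow> real \<Rightarrow> real \<Rightarrow> complex mat" where
  "block_mat4 a b c d = mat 4 4 (\<lambda>(i, j). of_real
     (if i = 0 \<and> j = 0 then a else if (i = 0 \<and> j = 3) \<or> (i = 3 \<and> j = 0) then b
      else if i = 1 \<and> j = 1 then c else if i = 3 \<and> j = 3 then d else 0))"

lemma ampdamp_id_diff_proj:
  assumes "0 \<le> \<mu>1" "\<mu>1 \<le> 1" "0 \<le> \<mu>2" "\<mu>2 \<le> 1" and "\<Psi> \<in> carrier_vec 4"
  shows "ampdamp_id \<mu>1 (proj \<Psi>) - ampdamp_id \<mu>2 (proj \<Psi>)
    = bell_frame \<Psi> * block_mat4 0 ((sqrt \<mu>1 - sqrt \<mu>2) / 2) (- (\<mu>1 - \<mu>2) / 2) ((\<mu>1 - \<mu>2) / 2)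
      * dagger (bell_frame \<Psi>)"
proof -
  have proj: "proj \<Psi> = mat 4 4 (\<lambda>(i, j). \<Psi> $ i * cnj (\<Psi> $ j))"
    using assms(5) unfolding proj_def by simp
  have sqrt_squares: "complex_of_real (sqrt 2) * (complex_of_real (sqrt 2) * z) = 2 * z"
    "complex_of_real (sqrt 2) * complex_of_real (sqrt 2) = 2"
    "complex_of_real (sqrt \<mu>1) * complex_of_real (sqrt \<mu>1) = of_real \<mu>1"
    "complex_of_real (sqrt \<mu>2) * complex_of_real (sqrt \<mu>2) = of_real \<mu>2" for z
    using assms by (simp_all add: of_real_sqrt_mult_self flip: mult.assoc)
  show ?thesis
    unfolding proj ampdamp_id_mat[OF assms(2)] ampdamp_id_mat[OF assms(4)] mat_minus_mat
      bell_frame_def block_mat4_def dagger_mat mat_mult_mat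
    by (rule eq_matI; simp only: dim_row_mat dim_col_mat nat_less_4_iff; elim disjE;
        simp add: sum_lessThan_4 ampdamp_id_diag_def sqrt_squares;
        simp add: ac_simps sqrt_squares algebra_simps numeral_2_eq_2 numeral_3_eq_3)
qed

lemma bell_frame_unitary:
  assumes "\<Psi> \<in> carrier_vec 4" and reduced: "ptrace_B (proj \<Psi>) = (1/2) \<cdot>\<^sub>m 1\<^sub>m 2"
  shows "dagger (bell_frame \<Psi>) * bell_frame \<Psi> = 1\<^sub>m 4"
proof -
  have proj: "proj \<Psi> = mat 4 4 (\<lambda>(i, j). \<Psi> $ i * cnj (\<Psi> $ j))"
    using assms(1) unfolding proj_def by simp
  have "ptrace_B (proj \<Psi>) $$ (a, b) = ((1/2) \<cdot>\<^sub>m 1\<^sub>m 2) $$ (a, b)" for a b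
    using reduced by simp
  note reduced_entry = this[unfolded ptrace_B_def proj, simplified]
  have "\<Psi> $ 0 * cnj (\<Psi> $ 0) + \<Psi> $ 1 * cnj (\<Psi> $ 1) = 1/2"
    using reduced_entry[of 0 0] by (simp add: sum_lessThan_2)
  then have e00: "2 * (\<Psi> $ 0 * cnj (\<Psi> $ 0)) + 2 * (\<Psi> $ 1 * cnj (\<Psi> $ 1)) = 1"
    by (simp add: field_simps)
  have e01: "\<Psi> $ 0 * cnj (\<Psi> $ 2) + \<Psi> $ 1 * cnj (\<Psi> $ 3) = 0"
    using reduced_entry[of 0 1] by (simp add: sum_lessThan_2)
  have e10: "cnj (\<Psi> $ 0) * \<Psi> $ 2 + cnj (\<Psi> $ 1) * \<Psi> $ 3 = 0"
    using arg_cong[OF e01, of cnj] by (simp add: mult.commute)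
  have "\<Psi> $ 2 * cnj (\<Psi> $ 2) + \<Psi> $ 3 * cnj (\<Psi> $ 3) = 1/2"
    using reduced_entry[of 1 1] by (simp add: sum_lessThan_2)
  then have e11: "2 * (\<Psi> $ 2 * cnj (\<Psi> $ 2)) + 2 * (\<Psi> $ 3 * cnj (\<Psi> $ 3)) = 1"
    by (simp add: field_simps)
  have "2 * (\<Psi> $ 0 * cnj (\<Psi> $ 2)) + 2 * (\<Psi> $ 1 * cnj (\<Psi> $ 3)) = 0"
    "2 * (cnj (\<Psi> $ 0) * \<Psi> $ 2) + 2 * (cnj (\<Psi> $ 1) * \<Psi> $ 3) = 0"
    using e01 e10 by (metis distrib_left mult_zero_right)+
  note entries = e00 e11 this
  have sqrt_square: "complex_of_real (sqrt 2) * (complex_of_real (sqrt 2) * z) = 2 * z"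
    "complex_of_real (sqrt 2) * complex_of_real (sqrt 2) = 2" for z
    by (simp_all add: of_real_sqrt_mult_self flip: mult.assoc)
  show ?thesis
    unfolding bell_frame_def dagger_mat mat_mult_mat
    by (rule eq_matI; simp add: nat_less_4_iff; elim disjE; simp add: sum_lessThan_4;
        insert entries[unfolded numeral_2_eq_2 numeral_3_eq_3 One_nat_def];
        simp add: ac_simps sqrt_square algebra_simps numeral_2_eq_2 numeral_3_eq_3)
qed

lemma dagger_block_mat4: "dagger (block_mat4 a b c d) = block_mat4 a b c d"
  unfolding block_mat4_def dagger_mat by (rule eq_matI) auto

lemma block_mat4_square:
  "block_mat4 a b c d * block_mat4 a b c d = block_mat4 (a * a + b * b) (a * b + b * d) (c * c) (b * b + d * d)"
  unfolding block_mat4_def mat_mult_mat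
  by (rule eq_matI; simp only: dim_row_mat dim_col_mat nat_less_4_iff; elim disjE;
      simp add: sum_lessThan_4 algebra_simps)

lemma mtrace_block_mat4: "mtrace (block_mat4 a b c d) = of_real (a + c + d)"
  unfolding mtrace_def block_mat4_def by (simp add: sum_lessThan_4)

lemma binary_quadratic_form_nonneg:
  fixes a b d x y :: real
  assumes "0 \<le> a" "0 \<le> d" "b * b \<le> a * d"
  shows "0 \<le> a * (x * x) + 2 * b * (x * y) + d * (y * y)"
proof (cases "a = 0")
  case True
  then have "b = 0" using assms(3) by (metis mult_zero_left mult_eq_0_iff le_less not_square_less_zero)
  then show ?thesis using True assms(2) by simp
next
  case False
  then have "a > 0" using assms(1) by simp
  have "a * (a * (x * x) + 2 * b * (x * y) + d * (y * y))
      = (a * x + b * y) * (a * x + b * y) + (a * d - b * b) * (y * y)"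
    by (simp add: algebra_simps)
  also have "\<dots> \<ge> 0" using assms(3) by (intro add_nonneg_nonneg) auto
  finally show ?thesis using \<open>a > 0\<close> by (simp add: zero_le_mult_iff)
qed

lemma psd_block_mat4:
  assumes "0 \<le> a" "0 \<le> c" "0 \<le> d" "b * b \<le> a * d"
  shows "psd 4 (block_mat4 a b c d)"
proof (rule psdI)
  show "block_mat4 a b c d \<in> carrier_mat 4 4" by (simp add: block_mat4_def)
  show "dagger (block_mat4 a b c d) = block_mat4 a b c d" by (rule dagger_block_mat4)
  fix x
  have "Re (sesqform 4 (block_mat4 a b c d) x x)
    = (a * (Re (x 0) * Re (x 0)) + 2 * b * (Re (x 0) * Re (x 3)) + d * (Re (x 3) * Re (x 3)))
    + (a * (Im (x 0) * Im (x 0)) + 2 * b * (Im (x 0) * Im (x 3)) + d * (Im (x 3) * Im (x 3)))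
    + c * (Re (x 1) * Re (x 1) + Im (x 1) * Im (x 1))"
    unfolding sesqform_def block_mat4_def sum_lessThan_4 by simp (simp add: algebra_simps)
  also have "\<dots> \<ge> 0"
  proof -
    have "0 \<le> c * (Re (x 1) * Re (x 1) + Im (x 1) * Im (x 1))" using assms(2) by simp
    then show ?thesis
      using binary_quadratic_form_nonneg[OF assms(1,3,4), of "Re (x 0)" "Re (x 3)"]
        binary_quadratic_form_nonneg[OF assms(1,3,4), of "Im (x 0)" "Im (x 3)"]
      by linarith
  qed
  finally show "0 \<le> Re (sesqform 4 (block_mat4 a b c d) x x)" .
qed

text \<open>The absolute value of the block \<open>N = [[0, e], [e, g]]\<close> is \<open>(N\<^sup>2 + |det N| I) / tr |N|\<close>
  with \<open>tr |N| = \<surd>(g\<^sup>2 + 4 e\<^sup>2)\<close>; when \<open>e = g = 0\<close> the division by zero yields \<open>0\<close>, which is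
  still correct.\<close>

lemma block_abs_entries:
  fixes e g :: real
  defines "r \<equiv> sqrt (g\<^sup>2 + 4 * e\<^sup>2)"
  defines "a \<equiv> 2 * e\<^sup>2 / r" and "b \<equiv> e * g / r" and "d \<equiv> (2 * e\<^sup>2 + g\<^sup>2) / r"
  shows "a * a + b * b = 0 * 0 + e * e" and "a * b + b * d = 0 * e + e * g"
    and "b * b + d * d = e * e + g * g"
    and "0 \<le> a" and "0 \<le> d" and "b * b \<le> a * d" and "a + d = r"
proof -
  have rr: "r * r = g\<^sup>2 + 4 * e\<^sup>2" unfolding r_def by simp
  show "0 \<le> a" "0 \<le> d" unfolding a_def d_def r_def by simp_all
  have "(e * g)\<^sup>2 \<le> 2 * e\<^sup>2 * (2 * e\<^sup>2 + g\<^sup>2)"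
  proof -
    have "2 * e\<^sup>2 * (2 * e\<^sup>2 + g\<^sup>2) - (e * g)\<^sup>2 = e\<^sup>2 * (4 * e\<^sup>2 + g\<^sup>2)"
      by (simp add: algebra_simps power2_eq_square)
    moreover have "0 \<le> e\<^sup>2 * (4 * e\<^sup>2 + g\<^sup>2)" by simp
    ultimately show ?thesis by linarith
  qed
  then have "(e * g)\<^sup>2 / (r * r) \<le> 2 * e\<^sup>2 * (2 * e\<^sup>2 + g\<^sup>2) / (r * r)"
    by (rule divide_right_mono) simp
  then show "b * b \<le> a * d"
    unfolding a_def b_def d_def by (simp add: power2_eq_square)
  have "(a * a + b * b = 0 * 0 + e * e \<and> a * b + b * d = 0 * e + e * g \<and> b * b + d * d = e * e + g * g)
    \<and> a + d = r"
  proof (cases "r = 0")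
    case True
    then have "e = 0" "g = 0" using rr by (auto simp: power2_eq_square add_nonneg_eq_0_iff)
    then show ?thesis using True unfolding a_def b_def d_def by simp
  next
    case False
    have rr': "r * r = g * g + e * (e * 4)"
      using rr by (simp add: power2_eq_square algebra_simps)
    have "a * a + b * b = e\<^sup>2 * (r * r) / (r * r)" "a * b + b * d = e * g * (r * r) / (r * r)"
      "b * b + d * d = (e\<^sup>2 + g\<^sup>2) * (r * r) / (r * r)" "a + d = r * r / r"
      unfolding a_def b_def d_def rr using False
      by (simp_all add: field_simps power2_eq_square, simp_all add: rr')
    then show ?thesis using False by (simp add: power2_eq_square)
  qed
  then show "a * a + b * b = 0 * 0 + e * e" "a * b + b * d = 0 * e + e * g"
    "b * b + d * d = e * e + g * g" "a + d = r"
    by auto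
qed

lemma block_mat4_absE:
  obtains P where "psd 4 P" and "P * P = dagger (block_mat4 0 e f g) * block_mat4 0 e f g"
    and "Re (mtrace P) = \<bar>f\<bar> + sqrt (g\<^sup>2 + 4 * e\<^sup>2)"
proof
  define r where "r = sqrt (g\<^sup>2 + 4 * e\<^sup>2)"
  define P where "P = block_mat4 (2 * e\<^sup>2 / r) (e * g / r) \<bar>f\<bar> ((2 * e\<^sup>2 + g\<^sup>2) / r)"
  note entries = block_abs_entries[of e g, folded r_def]
  show "psd 4 P"
    unfolding P_def using entries by (intro psd_block_mat4) auto
  show "P * P = dagger (block_mat4 0 e f g) * block_mat4 0 e f g"
    unfolding P_def dagger_block_mat4 block_mat4_square entries by simp
  show "Re (mtrace P) = \<bar>f\<bar> + sqrt (g\<^sup>2 + 4 * e\<^sup>2)"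
    unfolding P_def mtrace_block_mat4 using entries(7) by (simp add: r_def)
qed

lemma trace_norm_block_mat4: "trace_norm (block_mat4 0 e f g) = \<bar>f\<bar> + sqrt (g\<^sup>2 + 4 * e\<^sup>2)"
proof -
  obtain P where "psd 4 P" "P * P = dagger (block_mat4 0 e f g) * block_mat4 0 e f g"
    and trace: "Re (mtrace P) = \<bar>f\<bar> + sqrt (g\<^sup>2 + 4 * e\<^sup>2)"
    by (rule block_mat4_absE)
  then have "trace_norm (block_mat4 0 e f g) = Re (mtrace P)"
    by (intro trace_norm_eqI) (auto simp: block_mat4_def)
  then show ?thesis using trace by simp
qed

lemma trace_norm_ampdamp_id_diff:
  assumes "max_entangled \<Psi>" and \<mu>: "0 \<le> \<mu>2" "\<mu>2 \<le> \<mu>1" "\<mu>1 \<le> 1"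
  shows "trace_norm (ampdamp_id \<mu>1 (proj \<Psi>) - ampdamp_id \<mu>2 (proj \<Psi>))
    = (\<mu>1 - \<mu>2) / 2 + sqrt ((\<mu>1 - \<mu>2)\<^sup>2 + 4 * (sqrt \<mu>1 - sqrt \<mu>2)\<^sup>2) / 2"
proof -
  have \<Psi>: "\<Psi> \<in> carrier_vec 4" and reduced: "ptrace_B (proj \<Psi>) = (1/2) \<cdot>\<^sub>m 1\<^sub>m 2"
    using assms(1) unfolding max_entangled_def by auto
  define e where "e = sqrt \<mu>1 - sqrt \<mu>2"
  define d where "d = \<mu>1 - \<mu>2"
  define X where "X = block_mat4 0 (e / 2) (- d / 2) (d / 2)"
  define W where "W = bell_frame \<Psi>"
  have W: "W \<in> carrier_mat 4 4" and unitary: "dagger W * W = 1\<^sub>m 4"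
    unfolding W_def using bell_frame_unitary[OF \<Psi> reduced] by (simp_all add: bell_frame_def)
  obtain P where "psd 4 P" "P * P = dagger X * X"
    unfolding X_def by (rule block_mat4_absE)
  have "trace_norm (ampdamp_id \<mu>1 (proj \<Psi>) - ampdamp_id \<mu>2 (proj \<Psi>)) = trace_norm (W * X * dagger W)"
    unfolding W_def X_def e_def d_def using \<mu> \<Psi> by (simp add: ampdamp_id_diff_proj)
  also have "\<dots> = trace_norm X"
    using \<open>psd 4 P\<close> \<open>P * P = dagger X * X\<close>
    by (intro trace_norm_unitary_conj[OF W unitary]) (simp_all add: X_def block_mat4_def)
  also have "\<dots> = d / 2 + sqrt ((d / 2)\<^sup>2 + 4 * (e / 2)\<^sup>2)"
    unfolding X_def trace_norm_block_mat4 using \<mu> by (simp add: d_def)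
  also have "(d / 2)\<^sup>2 + 4 * (e / 2)\<^sup>2 = (d\<^sup>2 + 4 * e\<^sup>2) / 4"
    by (simp add: power_divide field_simps)
  also have "sqrt ((d\<^sup>2 + 4 * e\<^sup>2) / 4) = sqrt (d\<^sup>2 + 4 * e\<^sup>2) / 2"
    by (simp add: real_sqrt_divide real_sqrt_four)
  finally show ?thesis unfolding d_def e_def .
qed

lemma inverse_sqrt_one_minus_square_less:
  fixes s :: real
  assumes "0 < s" "s\<^sup>2 < 1/2"
  shows "1 / sqrt (1 - s\<^sup>2) < (s + sqrt (s\<^sup>2 + 4)) / 2"
proof -
  define c where "c = 1 - s\<^sup>2"
  define g where "g = sqrt (s\<^sup>2 + 4)"
  have "c > 0" unfolding c_def using assms(2) by simp
  have "g > 0" unfolding g_def by (simp add: add_nonneg_pos)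
  have g2: "g\<^sup>2 = s\<^sup>2 + 4" unfolding g_def by (simp add: add_nonneg_nonneg)
  have "(g * c)\<^sup>2 - (s * (1 + s\<^sup>2))\<^sup>2 = 4 - 8 * s\<^sup>2"
    unfolding power_mult_distrib g2 c_def by (simp add: algebra_simps power2_eq_square)
  then have "(s * (1 + s\<^sup>2))\<^sup>2 < (g * c)\<^sup>2"
    using assms(2) by simp
  then have gc: "s * (1 + s\<^sup>2) < g * c"
    using \<open>c > 0\<close> \<open>g > 0\<close> by (simp add: power2_less_imp_less)
  have "(2::real)\<^sup>2 = c * (2 * s\<^sup>2 + 4) + 2 * s * (s * (1 + s\<^sup>2))"
    unfolding c_def by (simp add: algebra_simps power2_eq_square)
  also have "\<dots> < c * (2 * s\<^sup>2 + 4) + 2 * s * (g * c)"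
    using gc assms(1) by simp
  also have "\<dots> = (sqrt c * (s + g))\<^sup>2"
    using \<open>c > 0\<close> g2 by (simp add: power_mult_distrib algebra_simps power2_eq_square)
  finally have "(2::real)\<^sup>2 < (sqrt c * (s + g))\<^sup>2" .
  moreover have "0 \<le> sqrt c * (s + g)"
    using \<open>c > 0\<close> \<open>g > 0\<close> assms(1) by simp
  ultimately have "2 < sqrt c * (s + g)"
    by (rule power2_less_imp_less)
  then show ?thesis
    unfolding c_def[symmetric] g_def[symmetric] using \<open>c > 0\<close> by (simp add: field_simps)
qed

lemma SUP_p_single_le:
  assumes "0 \<le> \<mu>2" "\<mu>2 \<le> \<mu>1" "\<mu>1 \<le> 1" "(sqrt \<mu>1 + sqrt \<mu>2)\<^sup>2 < 1"
  shows "(SUP \<rho>\<in>{\<rho>. density 2 \<rho>}. p_single \<mu>1 \<mu>2 \<rho>)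
    \<le> 1/2 + 1/4 * ((sqrt \<mu>1 - sqrt \<mu>2) / sqrt (1 - (sqrt \<mu>1 + sqrt \<mu>2)\<^sup>2))"
proof (rule cSUP_least)
  show "{\<rho>. density 2 \<rho>} \<noteq> {}" using density_qubit_state_0 by blast
  fix \<rho> assume "\<rho> \<in> {\<rho>. density 2 \<rho>}"
  then have "trace_norm (ampdamp \<mu>1 \<rho> - ampdamp \<mu>2 \<rho>)
      \<le> (sqrt \<mu>1 - sqrt \<mu>2) / sqrt (1 - (sqrt \<mu>1 + sqrt \<mu>2)\<^sup>2)"
    using assms by (intro trace_norm_ampdamp_diff_le) auto
  then show "p_single \<mu>1 \<mu>2 \<rho> \<le> 1/2 + 1/4 * ((sqrt \<mu>1 - sqrt \<mu>2) / sqrt (1 - (sqrt \<mu>1 + sqrt \<mu>2)\<^sup>2))"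
    unfolding p_single_def by linarith
qed

lemma p_ent_max_entangled:
  assumes "max_entangled \<Psi>" "0 \<le> \<mu>2" "\<mu>2 \<le> \<mu>1" "\<mu>1 \<le> 1"
  shows "p_ent \<mu>1 \<mu>2 (proj \<Psi>) = 1/2 + 1/4 * ((sqrt \<mu>1 - sqrt \<mu>2)
    * ((sqrt \<mu>1 + sqrt \<mu>2 + sqrt ((sqrt \<mu>1 + sqrt \<mu>2)\<^sup>2 + 4)) / 2))"
proof -
  define e where "e = sqrt \<mu>1 - sqrt \<mu>2"
  define s where "s = sqrt \<mu>1 + sqrt \<mu>2"
  have "e \<ge> 0" unfolding e_def using assms by simp
  have "\<mu>1 - \<mu>2 = e * s" unfolding e_def s_def using assms by (simp add: algebra_simps)
  have "(e * s)\<^sup>2 + 4 * e\<^sup>2 = e\<^sup>2 * (s\<^sup>2 + 4)"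
    by (simp add: power_mult_distrib algebra_simps)
  then have "sqrt ((e * s)\<^sup>2 + 4 * e\<^sup>2) = e * sqrt (s\<^sup>2 + 4)"
    using \<open>e \<ge> 0\<close> by (simp add: real_sqrt_mult)
  then show ?thesis
    unfolding p_ent_def trace_norm_ampdamp_id_diff[OF assms] e_def[symmetric] s_def[symmetric]
      \<open>\<mu>1 - \<mu>2 = e * s\<close>
    by (simp add: algebra_simps)
qed

theorem theorem6:
  fixes \<mu>1 \<mu>2 :: real and \<Psi> :: "complex vec"
  assumes "0 < \<mu>1" "\<mu>1 < 1" "0 < \<mu>2" "\<mu>2 < 1" "\<mu>1 > \<mu>2"
    and "(sqrt \<mu>1 + sqrt \<mu>2)^2 < 1/2"
    and "max_entangled \<Psi>"
  shows "p_ent \<mu>1 \<mu>2 (proj \<Psi>) > (SUP \<rho>\<in>{\<rho>. density 2 \<rho>}. p_single \<mu>1 \<mu>2 \<rho>)"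
proof -
  define e where "e = sqrt \<mu>1 - sqrt \<mu>2"
  define s where "s = sqrt \<mu>1 + sqrt \<mu>2"
  have "e > 0" "s > 0" "s\<^sup>2 < 1/2"
    unfolding e_def s_def using assms by (auto intro: add_pos_pos)
  have "(SUP \<rho>\<in>{\<rho>. density 2 \<rho>}. p_single \<mu>1 \<mu>2 \<rho>) \<le> 1/2 + 1/4 * (e / sqrt (1 - s\<^sup>2))"
    unfolding e_def s_def using assms by (intro SUP_p_single_le) auto
  also have "\<dots> < 1/2 + 1/4 * (e * ((s + sqrt (s\<^sup>2 + 4)) / 2))"
    using mult_strict_left_mono[OF inverse_sqrt_one_minus_square_less \<open>e > 0\<close>]
      \<open>s > 0\<close> \<open>s\<^sup>2 < 1/2\<close> by (simp add: ac_simps)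
  also have "\<dots> = p_ent \<mu>1 \<mu>2 (proj \<Psi>)"
    unfolding e_def s_def using assms by (intro p_ent_max_entangled[symmetric]) auto
  finally show ?thesis .
qed

end
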